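(* Let $\sigma$ be a (nonempty) input sequence of List Update with Time Windows and let $\sigma'$ be the sequence obtained from $\sigma$ by omitting all requests that are not triggering requests with respect to ALG run on $\sigma$. Then $$\frac{ALG(\sigma)}{OPT(\sigma)}\le\frac{ALG(\sigma')}{OPT(\sigma')}.$$
   Context: List Update with Time Windows. A set $\mathbb{E}$ of $n$ elements is kept in an ordered list (position $1$ is the head). An input $\sigma$ is a sequence of requests $r_1,\dots,r_m$; request $r_k$ specifies an element $e_k\in\mathbb{E}$, an arrival time $a_k$ and a deadline $q_k\ge a_k$. At any time an algorithm may (a) perform an access up to position $i$, at cost $i$, which serves every pending request (arrived and not yet served) whose element currently lies in positions $1,\dots,i$; (b) swap two adjacent elements at cost $1$. Actions are instantaneous. Every request must be served at some time in $[a_k,q_k]$. Cost = total access cost + number of swaps. $OPT(\sigma)$ is the minimum cost of an offline feasible solution from the same initial list. Algorithm ALG: whenever the current time equals the deadline of at least one pending request, let the triggering element be the element at the largest current position among those elements having a pending request whose deadline is the current time, and let $i$ be its position. ALG accesses the first $\min(2i-1,n)$ positions and then moves the triggering element to the front by $i-1$ adjacent swaps. At each such event, the triggering request is one (arbitrarily fixed) pending request for the triggering element whose deadline is the current time. A request of $\sigma$ is a triggering request (with respect to ALG) if it is the triggering request of some event of ALG on $\sigma$. *)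

theory Defs
  imports Complex_Main
begin

type_synonym 'a req = "'a \<times> real \<times> real"

definition elem :: "'a req \<Rightarrow> 'a" where "elem r = fst r"
definition arr :: "'a req \<Rightarrow> real" where "arr r = fst (snd r)"
definition dl :: "'a req \<Rightarrow> real" where "dl r = snd (snd r)"

(* 1-based position of x in the list xs *)
definition pos :: "'a list \<Rightarrow> 'a \<Rightarrow> nat" where
  "pos xs x = length (takeWhile (\<lambda>y. y \<noteq> x) xs) + 1"

(* Access i: access up to position i (cost i);
   Swp j: swap the adjacent elements at positions j and j+1 (cost 1). *)
datatype action = Access nat | Swp nat

definition swap_adj :: "nat \<Rightarrow> 'a list \<Rightarrow> 'a list" where
  "swap_adj j xs = xs[j - 1 := xs ! j, j := xs ! (j - 1)]"

fun apply_action :: "action \<Rightarrow> 'a list \<Rightarrow> 'a list" where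
  "apply_action (Access i) xs = xs"
| "apply_action (Swp j) xs = swap_adj j xs"

fun valid_action :: "nat \<Rightarrow> action \<Rightarrow> bool" where
  "valid_action n (Access i) = (1 \<le> i \<and> i \<le> n)"
| "valid_action n (Swp j) = (1 \<le> j \<and> j < n)"

fun action_cost :: "action \<Rightarrow> nat" where
  "action_cost (Access i) = i"
| "action_cost (Swp j) = 1"

(* A schedule: a finite list of timed actions, in nondecreasing time order;
   actions with equal time are executed in list order. *)
type_synonym schedule = "(real \<times> action) list"

(* list configuration just before the k-th action (0-based) *)
definition conf :: "'a list \<Rightarrow> schedule \<Rightarrow> nat \<Rightarrow> 'a list" where
  "conf L s k = fold apply_action (take k (map snd s)) L"

definition sched_cost :: "schedule \<Rightarrow> nat" where
  "sched_cost s = sum_list (map (\<lambda>p. action_cost (snd p)) s)"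

definition feasible :: "'a list \<Rightarrow> 'a req list \<Rightarrow> schedule \<Rightarrow> bool" where
  "feasible L \<sigma> s \<longleftrightarrow>
     sorted (map fst s) \<and>
     (\<forall>p \<in> set s. valid_action (length L) (snd p)) \<and>
     (\<forall>r \<in> set \<sigma>. \<exists>k < length s. arr r \<le> fst (s ! k) \<and> fst (s ! k) \<le> dl r \<and>
         (\<exists>i. snd (s ! k) = Access i \<and> elem r \<in> set (take i (conf L s k))))"

definition OPT :: "'a list \<Rightarrow> 'a req list \<Rightarrow> nat" where
  "OPT L \<sigma> = (LEAST c. \<exists>s. feasible L \<sigma> s \<and> sched_cost s = c)"

(* state: (current list, set of served request indices, accumulated cost,
           set of indices of triggering requests).
   ch is the fixed rule choosing the triggering request among the pending
   requests for the triggering element whose deadline is the current time. *)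
definition alg_step :: "(nat set \<Rightarrow> nat) \<Rightarrow> 'a req list \<Rightarrow> real \<Rightarrow>
    'a list \<times> nat set \<times> nat \<times> nat set \<Rightarrow> 'a list \<times> nat set \<times> nat \<times> nat set" where
  "alg_step ch \<sigma> t st =
    (case st of (xs, served, c, trig) \<Rightarrow>
      (let P = {k. k < length \<sigma> \<and> k \<notin> served \<and> arr (\<sigma> ! k) \<le> t \<and> dl (\<sigma> ! k) = t} in
       if P = {} then st else
       (let i = Max ((\<lambda>k. pos xs (elem (\<sigma> ! k))) ` P);
            e = xs ! (i - 1);
            m = min (2 * i - 1) (length xs);
            newserved = {k. k < length \<sigma> \<and> k \<notin> served \<and> arr (\<sigma> ! k) \<le> t
                            \<and> pos xs (elem (\<sigma> ! k)) \<le> m};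
            tr = ch {k \<in> P. elem (\<sigma> ! k) = e}
        in (e # remove1 e xs, served \<union> newserved, c + m + (i - 1), insert tr trig))))"

definition alg_run :: "(nat set \<Rightarrow> nat) \<Rightarrow> 'a list \<Rightarrow> 'a req list \<Rightarrow>
    'a list \<times> nat set \<times> nat \<times> nat set" where
  "alg_run ch L \<sigma> = fold (alg_step ch \<sigma>) (sorted_list_of_set (dl ` set \<sigma>)) (L, {}, 0, {})"

definition ALG :: "(nat set \<Rightarrow> nat) \<Rightarrow> 'a list \<Rightarrow> 'a req list \<Rightarrow> nat" where
  "ALG ch L \<sigma> = fst (snd (snd (alg_run ch L \<sigma>)))"

definition triggering :: "(nat set \<Rightarrow> nat) \<Rightarrow> 'a list \<Rightarrow> 'a req list \<Rightarrow> nat set" where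
  "triggering ch L \<sigma> = snd (snd (snd (alg_run ch L \<sigma>)))"

end

theory Submission imports Defs begin

text \<open>
  On the subsequence \<open>\<sigma>'\<close> of triggering requests, ALG makes exactly the same moves as on \<open>\<sigma>\<close>.
  At each event of the run on \<open>\<sigma>\<close> the triggering request is still pending in \<open>\<sigma>'\<close>, and it
  sits at the largest position among the requests due at that moment; the requests of \<open>\<sigma>'\<close>
  due then form a subset of those of \<open>\<sigma>\<close>, so ALG on \<open>\<sigma>'\<close> picks an element at the same
  position, i.e. the same element, pays the same cost and produces the same list. Whenever
  nothing is due in \<open>\<sigma>\<close>, nothing is due in \<open>\<sigma>'\<close> either. Hence \<open>ALG(\<sigma>') = ALG(\<sigma>)\<close>.
  On the other side every schedule feasible for \<open>\<sigma>\<close> is feasible for its subsequence \<open>\<sigma>'\<close>,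
  so \<open>0 < OPT(\<sigma>') \<le> OPT(\<sigma>)\<close>, the first inequality because \<open>\<sigma>'\<close> contains the triggering
  request of the first event.
\<close>

lemma nth_pos:
  assumes "x \<in> set xs"
  shows "xs ! (pos xs x - 1) = x"
  using assms by (induction xs) (auto simp: pos_def)

lemma pos_inj:
  assumes "x \<in> set xs" "y \<in> set xs" "pos xs x = pos xs y"
  shows "x = y"
  using nth_pos assms by metis

lemma insert_set_remove1: "x \<in> set xs \<Longrightarrow> insert x (set (remove1 x xs)) = set xs"
  by (induction xs) auto

lemma filter_sorted_list_of_set:
  fixes A B :: "'b :: linorder set"
  assumes "A \<subseteq> B" "finite B"
  shows "filter (\<lambda>x. x \<in> A) (sorted_list_of_set B) = sorted_list_of_set A"
proof -
  have "finite A"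
    using assms finite_subset by blast
  then show ?thesis
    using assms by (intro sorted_distinct_set_unique) (auto simp: sorted_wrt_filter)
qed

type_synonym 'a alg_state = "'a list \<times> nat set \<times> nat \<times> nat set"

fun alg_cost :: "'a alg_state \<Rightarrow> nat" where
  "alg_cost (xs, S, c, Tr) = c"

fun alg_trig :: "'a alg_state \<Rightarrow> nat set" where
  "alg_trig (xs, S, c, Tr) = Tr"

lemma ALG_alg_cost: "ALG ch L \<sigma> = alg_cost (alg_run ch L \<sigma>)"
  by (cases "alg_run ch L \<sigma>") (simp add: ALG_def)

lemma triggering_alg_trig: "triggering ch L \<sigma> = alg_trig (alg_run ch L \<sigma>)"
  by (cases "alg_run ch L \<sigma>") (simp add: triggering_def)

definition due :: "'a req list \<Rightarrow> nat set \<Rightarrow> real \<Rightarrow> nat set" where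
  "due \<sigma> S t = {k. k < length \<sigma> \<and> k \<notin> S \<and> arr (\<sigma> ! k) \<le> t \<and> dl (\<sigma> ! k) = t}"

lemma finite_due [simp]: "finite (due \<sigma> S t)"
  by (simp add: due_def)

lemma due_map_nth:
  assumes "\<forall>i \<in> set I. i < length \<sigma>" "\<forall>j < length I. I ! j \<in> S \<longleftrightarrow> j \<in> S'"
  shows "due (map ((!) \<sigma>) I) S' t = {j. j < length I \<and> I ! j \<in> due \<sigma> S t}"
  using assms by (auto simp: due_def)

fun alg_event :: "'a req list \<Rightarrow> real \<Rightarrow> nat \<Rightarrow> 'a alg_state \<Rightarrow> 'a alg_state" where
  "alg_event \<sigma> t tr (xs, S, c, Tr) =
    (let e = elem (\<sigma> ! tr); i = pos xs e; m = min (2 * i - 1) (length xs)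
     in (e # remove1 e xs,
         S \<union> {k. k < length \<sigma> \<and> k \<notin> S \<and> arr (\<sigma> ! k) \<le> t \<and> pos xs (elem (\<sigma> ! k)) \<le> m},
         c + m + (i - 1), insert tr Tr))"

lemma alg_step_due:
  "alg_step ch \<sigma> t (xs, S, c, Tr) =
    (let P = due \<sigma> S t in
     if P = {} then (xs, S, c, Tr) else
     (let i = Max ((\<lambda>k. pos xs (elem (\<sigma> ! k))) ` P);
          e = xs ! (i - 1);
          m = min (2 * i - 1) (length xs)
      in (e # remove1 e xs,
          S \<union> {k. k < length \<sigma> \<and> k \<notin> S \<and> arr (\<sigma> ! k) \<le> t \<and> pos xs (elem (\<sigma> ! k)) \<le> m},
          c + m + (i - 1), insert (ch {k \<in> P. elem (\<sigma> ! k) = e}) Tr)))"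
  by (simp only: alg_step_def due_def prod.case Let_def)

lemma alg_step_idle:
  assumes "due \<sigma> S t = {}"
  shows "alg_step ch \<sigma> t (xs, S, c, Tr) = (xs, S, c, Tr)"
  using assms by (simp add: alg_step_def due_def)

lemma alg_step_trigger:
  assumes "due \<sigma> S t \<noteq> {}"
    and elems: "\<forall>k < length \<sigma>. elem (\<sigma> ! k) \<in> set xs"
    and ch: "\<forall>S. finite S \<and> S \<noteq> {} \<longrightarrow> ch S \<in> S"
  obtains tr where "tr \<in> due \<sigma> S t"
    and "pos xs (elem (\<sigma> ! tr)) = Max ((\<lambda>k. pos xs (elem (\<sigma> ! k))) ` due \<sigma> S t)"
    and "alg_step ch \<sigma> t (xs, S, c, Tr) = alg_event \<sigma> t tr (xs, S, c, Tr)"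
proof -
  define P where "P = due \<sigma> S t"
  define i where "i = Max ((\<lambda>k. pos xs (elem (\<sigma> ! k))) ` P)"
  define e where "e = xs ! (i - 1)"
  define C where "C = {k \<in> P. elem (\<sigma> ! k) = e}"
  have "i \<in> (\<lambda>k. pos xs (elem (\<sigma> ! k))) ` P"
    unfolding i_def using assms(1) by (intro Max_in) (auto simp: P_def)
  then obtain k0 where k0: "k0 \<in> P" "pos xs (elem (\<sigma> ! k0)) = i"
    by auto
  have "elem (\<sigma> ! k0) \<in> set xs"
    using k0(1) elems by (simp add: P_def due_def)
  then have "elem (\<sigma> ! k0) = e"
    using k0(2) nth_pos unfolding e_def by metis
  then have "k0 \<in> C"
    using k0(1) unfolding C_def by simp
  moreover have "finite C"
    unfolding C_def P_def by simp
  ultimately have "ch C \<in> C"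
    using ch by blast
  then have tr: "ch C \<in> P" "elem (\<sigma> ! ch C) = e" "pos xs e = i"
    using k0 \<open>elem (\<sigma> ! k0) = e\<close> unfolding C_def by auto
  have "alg_step ch \<sigma> t (xs, S, c, Tr) = alg_event \<sigma> t (ch C) (xs, S, c, Tr)"
    using assms(1) tr(2,3) by (simp add: alg_step_due Let_def e_def C_def flip: P_def i_def)
  then show ?thesis
    using tr unfolding P_def by (intro that[of "ch C"]) (simp_all add: i_def P_def)
qed

lemma alg_trig_alg_step_mono: "alg_trig st \<subseteq> alg_trig (alg_step ch \<sigma> t st)"
  by (cases st) (simp add: alg_step_due Let_def subset_insertI)

lemma alg_trig_fold_mono: "alg_trig st \<subseteq> alg_trig (fold (alg_step ch \<sigma>) ds st)"
proof (induction ds arbitrary: st)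
  case (Cons t ds)
  have "alg_trig st \<subseteq> alg_trig (alg_step ch \<sigma> t st)"
    by (rule alg_trig_alg_step_mono)
  also have "\<dots> \<subseteq> alg_trig (fold (alg_step ch \<sigma>) ds (alg_step ch \<sigma> t st))"
    by (rule Cons.IH)
  finally show ?case
    by simp
qed simp

lemma alg_step_invariants:
  assumes elems: "\<forall>k < length \<sigma>. elem (\<sigma> ! k) \<in> set xs"
    and ch: "\<forall>S. finite S \<and> S \<noteq> {} \<longrightarrow> ch S \<in> S"
  shows "set (fst (alg_step ch \<sigma> t (xs, S, c, Tr))) = set xs
    \<and> alg_trig (alg_step ch \<sigma> t (xs, S, c, Tr)) \<subseteq> Tr \<union> {..<length \<sigma>}"
proof (cases "due \<sigma> S t = {}")
  case False
  obtain tr where "tr \<in> due \<sigma> S t"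
    and "alg_step ch \<sigma> t (xs, S, c, Tr) = alg_event \<sigma> t tr (xs, S, c, Tr)"
    by (rule alg_step_trigger[OF False elems ch])
  then show ?thesis
    using elems by (simp add: due_def Let_def insert_set_remove1)
qed (simp add: alg_step_idle)

lemma alg_trig_fold_bound:
  assumes "\<forall>k < length \<sigma>. elem (\<sigma> ! k) \<in> set xs"
    and ch: "\<forall>S. finite S \<and> S \<noteq> {} \<longrightarrow> ch S \<in> S"
  shows "alg_trig (fold (alg_step ch \<sigma>) ds (xs, S, c, Tr)) \<subseteq> Tr \<union> {..<length \<sigma>}"
  using assms(1)
proof (induction ds arbitrary: xs S c Tr)
  case (Cons t ds)
  obtain xs1 S1 c1 Tr1 where step: "alg_step ch \<sigma> t (xs, S, c, Tr) = (xs1, S1, c1, Tr1)"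
    by (cases "alg_step ch \<sigma> t (xs, S, c, Tr)")
  have "set xs1 = set xs" "Tr1 \<subseteq> Tr \<union> {..<length \<sigma>}"
    using alg_step_invariants[OF Cons.prems ch, of t S c Tr] step by simp_all
  moreover have "alg_trig (fold (alg_step ch \<sigma>) ds (xs1, S1, c1, Tr1)) \<subseteq> Tr1 \<union> {..<length \<sigma>}"
    using Cons.IH Cons.prems \<open>set xs1 = set xs\<close> by simp
  ultimately show ?case
    using step by auto
qed simp

lemma triggering_subset:
  assumes "\<forall>r \<in> set \<sigma>. elem r \<in> set L"
    and "\<forall>S. finite S \<and> S \<noteq> {} \<longrightarrow> ch S \<in> S"
  shows "triggering ch L \<sigma> \<subseteq> {..<length \<sigma>}"
  using alg_trig_fold_bound[of \<sigma> L ch _ "{}" 0 "{}"] assms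
  by (simp add: triggering_alg_trig alg_run_def)

lemma alg_step_map_nth_sim:
  fixes \<sigma> :: "'a req list" and I :: "nat list"
  assumes I: "\<forall>i \<in> set I. i < length \<sigma>"
    and served: "\<forall>j < length I. I ! j \<in> S \<longleftrightarrow> j \<in> S'"
    and elems: "\<forall>k < length \<sigma>. elem (\<sigma> ! k) \<in> set xs"
    and ch: "\<forall>S. finite S \<and> S \<noteq> {} \<longrightarrow> ch S \<in> S"
    and step: "alg_step ch \<sigma> t (xs, S, c, Tr) = (xs1, S1, c1, Tr1)"
    and trig: "Tr1 \<subseteq> set I"
  obtains S2 Tr2 where "alg_step ch (map ((!) \<sigma>) I) t (xs, S', c, Tr') = (xs1, S2, c1, Tr2)"
    and "\<forall>j < length I. I ! j \<in> S1 \<longleftrightarrow> j \<in> S2"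
proof -
  let ?\<tau> = "map ((!) \<sigma>) I"
  let ?p = "\<lambda>k. pos xs (elem (\<sigma> ! k))"
  let ?q = "\<lambda>k. pos xs (elem (?\<tau> ! k))"
  have due_\<tau>: "due ?\<tau> S' t = {j. j < length I \<and> I ! j \<in> due \<sigma> S t}"
    using I served by (rule due_map_nth)
  show ?thesis
  proof (cases "due \<sigma> S t = {}")
    case True
    then have "due ?\<tau> S' t = {}"
      using due_\<tau> by simp
    then show ?thesis
      using True step served by (intro that[of S' Tr']) (simp_all add: alg_step_idle)
  next
    case False
    obtain tr where tr: "tr \<in> due \<sigma> S t" "?p tr = Max (?p ` due \<sigma> S t)"
      and step_\<sigma>: "alg_step ch \<sigma> t (xs, S, c, Tr) = alg_event \<sigma> t tr (xs, S, c, Tr)"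
      by (rule alg_step_trigger[OF False elems ch])
    have "tr \<in> set I"
      using trig step step_\<sigma> by (auto simp: Let_def)
    then obtain j where j: "j < length I" "I ! j = tr"
      by (auto simp: in_set_conv_nth)
    then have "j \<in> due ?\<tau> S' t"
      using due_\<tau> tr(1) by simp
    then have nonempty: "due ?\<tau> S' t \<noteq> {}"
      by blast
    have elems_\<tau>: "\<forall>k < length ?\<tau>. elem (?\<tau> ! k) \<in> set xs"
      using I elems by simp
    obtain tr' where tr': "tr' \<in> due ?\<tau> S' t" "?q tr' = Max (?q ` due ?\<tau> S' t)"
      and step_\<tau>: "alg_step ch ?\<tau> t (xs, S', c, Tr') = alg_event ?\<tau> t tr' (xs, S', c, Tr')"
      by (rule alg_step_trigger[OF nonempty elems_\<tau> ch])
    txt \<open>The triggering request of \<open>\<sigma>\<close> survives in \<open>?\<tau>\<close>, so both runs see the same maximal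
      position among the due requests.\<close>
    have image_\<tau>: "?q ` due ?\<tau> S' t \<subseteq> ?p ` due \<sigma> S t"
      using due_\<tau> by auto
    have "?p tr \<in> ?q ` due ?\<tau> S' t"
      using \<open>j \<in> due ?\<tau> S' t\<close> j due_\<tau> by force
    then have "?p tr \<le> ?q tr'"
      unfolding tr'(2) by (intro Max_ge) simp_all
    moreover have "?q tr' \<le> ?p tr"
      unfolding tr(2) tr'(2) using nonempty by (intro Max_mono[OF image_\<tau>]) simp_all
    ultimately have same_pos: "?q tr' = ?p tr"
      by simp
    have same_elem: "elem (?\<tau> ! tr') = elem (\<sigma> ! tr)"
    proof (rule pos_inj)
      show "elem (?\<tau> ! tr') \<in> set xs"
        using tr'(1) elems_\<tau> unfolding due_def by blast
      show "elem (\<sigma> ! tr) \<in> set xs"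
        using tr(1) elems unfolding due_def by blast
    qed (rule same_pos)
    define m where "m = min (2 * ?p tr - 1) (length xs)"
    define S2 where "S2 = S' \<union> {k. k < length I \<and> k \<notin> S' \<and> arr (?\<tau> ! k) \<le> t \<and> ?q k \<le> m}"
    have S1: "S1 = S \<union> {k. k < length \<sigma> \<and> k \<notin> S \<and> arr (\<sigma> ! k) \<le> t \<and> ?p k \<le> m}"
      using step step_\<sigma> unfolding m_def by (simp add: Let_def)
    have "alg_step ch ?\<tau> t (xs, S', c, Tr') = (xs1, S2, c1, insert tr' Tr')"
      using step step_\<sigma> step_\<tau> unfolding S2_def m_def by (simp add: Let_def same_elem)
    moreover have "\<forall>j < length I. I ! j \<in> S1 \<longleftrightarrow> j \<in> S2"
      using served I unfolding S1 S2_def by auto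
    ultimately show ?thesis
      by (rule that)
  qed
qed

lemma fold_alg_step_map_nth_sim:
  fixes \<sigma> :: "'a req list" and I :: "nat list"
  assumes I: "\<forall>i \<in> set I. i < length \<sigma>"
    and "\<forall>j < length I. I ! j \<in> S \<longleftrightarrow> j \<in> S'"
    and "\<forall>k < length \<sigma>. elem (\<sigma> ! k) \<in> set xs"
    and ch: "\<forall>S. finite S \<and> S \<noteq> {} \<longrightarrow> ch S \<in> S"
    and "alg_trig (fold (alg_step ch \<sigma>) ds (xs, S, c, Tr)) \<subseteq> set I"
  shows "alg_cost (fold (alg_step ch (map ((!) \<sigma>) I)) ds (xs, S', c, Tr'))
       = alg_cost (fold (alg_step ch \<sigma>) ds (xs, S, c, Tr))"
  using assms(2,3,5)
proof (induction ds arbitrary: xs S S' c Tr Tr')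
  case (Cons t ds)
  obtain xs1 S1 c1 Tr1 where step: "alg_step ch \<sigma> t (xs, S, c, Tr) = (xs1, S1, c1, Tr1)"
    by (cases "alg_step ch \<sigma> t (xs, S, c, Tr)")
  have trig_rest: "alg_trig (fold (alg_step ch \<sigma>) ds (xs1, S1, c1, Tr1)) \<subseteq> set I"
    using Cons.prems(3) step by simp
  then have "Tr1 \<subseteq> set I"
    using alg_trig_fold_mono[of "(xs1, S1, c1, Tr1)"] by fastforce
  then obtain S2 Tr2
    where step': "alg_step ch (map ((!) \<sigma>) I) t (xs, S', c, Tr') = (xs1, S2, c1, Tr2)"
      and "\<forall>j < length I. I ! j \<in> S1 \<longleftrightarrow> j \<in> S2"
    by (rule alg_step_map_nth_sim[OF I Cons.prems(1,2) ch step])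
  moreover have "set xs1 = set xs"
    using alg_step_invariants[OF Cons.prems(2) ch, of t S c Tr] step by simp
  ultimately have "alg_cost (fold (alg_step ch (map ((!) \<sigma>) I)) ds (xs1, S2, c1, Tr2))
      = alg_cost (fold (alg_step ch \<sigma>) ds (xs1, S1, c1, Tr1))"
    using Cons.IH Cons.prems(2) trig_rest by simp
  then show ?case
    using step step' by simp
qed simp

lemma alg_step_non_deadline:
  assumes "t \<notin> dl ` set \<sigma>"
  shows "alg_step ch \<sigma> t st = st"
proof (cases st)
  case (fields xs S c Tr)
  have "due \<sigma> S t = {}"
    using assms by (auto simp: due_def)
  then show ?thesis
    by (simp add: fields alg_step_idle)
qed

lemma fold_alg_step_filter_deadlines:
  "fold (alg_step ch \<sigma>) (filter (\<lambda>t. t \<in> dl ` set \<sigma>) ds) st = fold (alg_step ch \<sigma>) ds st"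
  by (induction ds arbitrary: st) (simp_all add: alg_step_non_deadline)

lemma alg_run_deadlines_superset:
  assumes "dl ` set \<sigma> \<subseteq> A" "finite A"
  shows "alg_run ch L \<sigma> = fold (alg_step ch \<sigma>) (sorted_list_of_set A) (L, {}, 0, {})"
  using fold_alg_step_filter_deadlines[of ch \<sigma> "sorted_list_of_set A"]
  by (simp add: alg_run_def filter_sorted_list_of_set assms)

lemma ALG_nths_triggering:
  assumes elems: "\<forall>r \<in> set \<sigma>. elem r \<in> set L"
    and ch: "\<forall>S. finite S \<and> S \<noteq> {} \<longrightarrow> ch S \<in> S"
  shows "ALG ch L (nths \<sigma> (triggering ch L \<sigma>)) = ALG ch L \<sigma>"
proof -
  define T where "T = triggering ch L \<sigma>"
  define I where "I = nths [0..<length \<sigma>] T"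
  define D where "D = sorted_list_of_set (dl ` set \<sigma>)"
  have \<sigma>': "nths \<sigma> T = map ((!) \<sigma>) I"
    unfolding I_def by (metis map_nth nths_map)
  have "set I = T"
    using triggering_subset[OF elems ch] unfolding I_def T_def by (force simp: set_nths)
  then have trig: "alg_trig (fold (alg_step ch \<sigma>) D (L, {}, 0, {})) \<subseteq> set I"
    unfolding T_def D_def by (simp add: triggering_alg_trig alg_run_def)
  have "dl ` set (nths \<sigma> T) \<subseteq> dl ` set \<sigma>"
    by (intro image_mono set_nths_subset)
  then have "alg_run ch L (nths \<sigma> T) = fold (alg_step ch (map ((!) \<sigma>) I)) D (L, {}, 0, {})"
    unfolding D_def by (subst alg_run_deadlines_superset) (simp_all add: \<sigma>')
  moreover have "\<forall>i \<in> set I. i < length \<sigma>"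
    unfolding I_def by (auto simp: set_nths)
  ultimately show ?thesis
    using fold_alg_step_map_nth_sim[of I \<sigma> "{}" "{}" L ch D 0 "{}" "{}"] elems ch trig
    by (simp add: ALG_alg_cost T_def D_def alg_run_def)
qed

lemma nths_triggering_nonempty:
  assumes "\<sigma> \<noteq> []"
    and \<sigma>: "\<forall>r \<in> set \<sigma>. elem r \<in> set L \<and> arr r \<le> dl r"
    and ch: "\<forall>S. finite S \<and> S \<noteq> {} \<longrightarrow> ch S \<in> S"
  shows "nths \<sigma> (triggering ch L \<sigma>) \<noteq> []"
proof -
  obtain t ds where D: "sorted_list_of_set (dl ` set \<sigma>) = t # ds"
    using assms(1) by (cases "sorted_list_of_set (dl ` set \<sigma>)") auto
  then have "t \<in> dl ` set \<sigma>"
    by (metis finite_imageI finite_set list.set_intros(1) set_sorted_list_of_set)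
  then obtain k where "k < length \<sigma>" "dl (\<sigma> ! k) = t"
    by (auto simp: in_set_conv_nth)
  then have "k \<in> due \<sigma> {} t"
    using \<sigma> by (auto simp: due_def)
  then have nonempty: "due \<sigma> {} t \<noteq> {}"
    by blast
  have elems: "\<forall>k < length \<sigma>. elem (\<sigma> ! k) \<in> set L"
    using \<sigma> by simp
  obtain tr where "tr \<in> due \<sigma> {} t"
    and "alg_step ch \<sigma> t (L, {}, 0, {}) = alg_event \<sigma> t tr (L, {}, 0, {})"
    by (rule alg_step_trigger[OF nonempty elems ch])
  moreover have "alg_trig (alg_step ch \<sigma> t (L, {}, 0, {})) \<subseteq> triggering ch L \<sigma>"
    using alg_trig_fold_mono by (simp add: triggering_alg_trig alg_run_def D)
  ultimately have "tr < length \<sigma> \<and> tr \<in> triggering ch L \<sigma>"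
    by (simp add: due_def Let_def)
  then have "\<sigma> ! tr \<in> set (nths \<sigma> (triggering ch L \<sigma>))"
    unfolding set_nths by blast
  then show ?thesis
    by auto
qed

lemma fold_Access:
  "\<forall>a \<in> set as. \<exists>i. a = Access i \<Longrightarrow> fold apply_action as L = L"
  by (induction as arbitrary: L) auto

lemma feasible_exists:
  assumes "\<forall>r \<in> set \<sigma>. elem r \<in> set L \<and> arr r \<le> dl r"
  shows "\<exists>s. feasible L \<sigma> s"
proof -
  define D where "D = sorted_list_of_set (dl ` set \<sigma>)"
  define s where "s = map (\<lambda>t. (t, Access (length L))) D"
  have "feasible L \<sigma> s"
    unfolding feasible_def
  proof (intro conjI ballI)
    show "sorted (map fst s)"
      by (simp add: s_def D_def o_def)
    show "valid_action (length L) (snd p)" if "p \<in> set s" for p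
      using that assms unfolding s_def D_def by (auto simp: Suc_le_eq)
    fix r
    assume r: "r \<in> set \<sigma>"
    then have "dl r \<in> set D"
      by (simp add: D_def)
    then obtain k where k: "k < length D" "D ! k = dl r"
      by (meson in_set_conv_nth)
    have "conf L s k = L"
      unfolding conf_def by (rule fold_Access) (auto simp: s_def dest!: in_set_takeD)
    then show "\<exists>k < length s. arr r \<le> fst (s ! k) \<and> fst (s ! k) \<le> dl r \<and>
        (\<exists>i. snd (s ! k) = Access i \<and> elem r \<in> set (take i (conf L s k)))"
      using k r assms by (intro exI[of _ k]) (auto simp: s_def)
  qed
  then show ?thesis
    by blast
qed

lemma feasible_subset: "feasible L \<sigma> s \<Longrightarrow> set \<tau> \<subseteq> set \<sigma> \<Longrightarrow> feasible L \<tau> s"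
  unfolding feasible_def by blast

lemma sched_cost_pos:
  assumes "feasible L \<sigma> s" "\<sigma> \<noteq> []"
  shows "0 < sched_cost s"
proof -
  obtain r where "r \<in> set \<sigma>"
    using assms(2) by (cases \<sigma>) auto
  then obtain k i where k: "k < length s" "snd (s ! k) = Access i" "elem r \<in> set (take i (conf L s k))"
    using assms(1) unfolding feasible_def by blast
  then have "0 < action_cost (snd (s ! k))"
    by (cases i) auto
  also have "\<dots> \<le> sched_cost s"
    unfolding sched_cost_def using k(1) by (intro member_le_sum_list) (auto intro: nth_mem)
  finally show ?thesis .
qed

lemma OPT_witness:
  assumes "feasible L \<sigma> s"
  obtains s' where "feasible L \<sigma> s'" "sched_cost s' = OPT L \<sigma>"
  using LeastI_ex[of "\<lambda>c. \<exists>s. feasible L \<sigma> s \<and> sched_cost s = c"] assms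
  unfolding OPT_def by blast

lemma OPT_mono:
  assumes "feasible L \<sigma> s" "set \<tau> \<subseteq> set \<sigma>"
  shows "OPT L \<tau> \<le> OPT L \<sigma>"
proof -
  obtain s' where "feasible L \<tau> s'" "sched_cost s' = OPT L \<sigma>"
    using OPT_witness[OF assms(1)] feasible_subset[OF _ assms(2)] by metis
  then show ?thesis
    unfolding OPT_def[of L \<tau>] by (intro Least_le) blast
qed

lemma OPT_pos:
  assumes "feasible L \<sigma> s" "\<sigma> \<noteq> []"
  shows "0 < OPT L \<sigma>"
  using OPT_witness[OF assms(1)] sched_cost_pos assms(2) by metis

theorem mainTheorem3:
  fixes L :: "'a list" and \<sigma> :: "'a req list" and ch :: "nat set \<Rightarrow> nat"
  assumes "distinct L"
    and "\<sigma> \<noteq> []"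
    and "\<forall>r \<in> set \<sigma>. elem r \<in> set L \<and> arr r \<le> dl r"
    and "\<forall>S. finite S \<and> S \<noteq> {} \<longrightarrow> ch S \<in> S"
  shows "real (ALG ch L \<sigma>) / real (OPT L \<sigma>)
         \<le> real (ALG ch L (nths \<sigma> (triggering ch L \<sigma>)))
             / real (OPT L (nths \<sigma> (triggering ch L \<sigma>)))"
proof -
  define \<sigma>' where "\<sigma>' = nths \<sigma> (triggering ch L \<sigma>)"
  have sub: "set \<sigma>' \<subseteq> set \<sigma>"
    unfolding \<sigma>'_def by (rule set_nths_subset)
  obtain s where s: "feasible L \<sigma> s"
    using feasible_exists[OF assms(3)] by blast
  have ALG_eq: "ALG ch L \<sigma>' = ALG ch L \<sigma>"
    unfolding \<sigma>'_def using assms(3,4) by (intro ALG_nths_triggering) auto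
  have OPT_le: "OPT L \<sigma>' \<le> OPT L \<sigma>"
    using s sub by (rule OPT_mono)
  have "\<sigma>' \<noteq> []"
    unfolding \<sigma>'_def using assms(2-4) by (rule nths_triggering_nonempty)
  then have OPT_pos': "0 < OPT L \<sigma>'"
    using feasible_subset[OF s sub] by (intro OPT_pos)
  have "real (ALG ch L \<sigma>) / real (OPT L \<sigma>) \<le> real (ALG ch L \<sigma>') / real (OPT L \<sigma>')"
    unfolding ALG_eq using OPT_le OPT_pos' by (intro divide_left_mono) simp_all
  then show ?thesis
    unfolding \<sigma>'_def .
qed

end
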